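(* Let $\mathcal{D}=(\Omega,\mathcal{B})$ be a supersimple $2$-$(n,4,\lambda)$ design with $n=2\lambda+2$, and let $\infty\in\Omega$. The following are equivalent: (1) $\mathcal{D}$ satisfies property $(\triangle)$; (2) $\mathcal{D}$ is a Boolean quadruple system of order $2^m$ for some integer $m\ge2$; (3) $\pi_\infty(\mathcal{D})=\{1\}$ and $\mathcal{L}_\infty(\mathcal{D})$ is elementary abelian of order $2^m$ for some integer $m\ge2$.
   Context: A $2$-$(n,4,\lambda)$ design $(\Omega,\mathcal{B})$: $n$ points, a multiset of $4$-subsets (lines), every $2$-subset in exactly $\lambda$ lines; supersimple: distinct lines meet in at most two points. For distinct $a,b$ with lines $\{a,b,a_i,b_i\}$ ($1\le i\le\lambda$) through them, the elementary move is $[a,b]:=(a,b)\prod_i(a_i,b_i)\in\operatorname{Sym}(\Omega)$; $[a,a]:=1$. Permutations act on the right, products composed left to right; $[a_0,\dots,a_k]:=[a_0,a_1]\cdots[a_{k-1},a_k]$. $\mathcal{L}_\infty(\mathcal{D})$ is the set of all move sequences starting at $\infty$, and $\pi_\infty(\mathcal{D})$ the set of all move sequences starting and ending at $\infty$. Property $(\triangle)$: if $B_1,B_2\in\mathcal{B}$ with $|B_1\cap B_2|=2$ then $B_1\triangle B_2\in\mathcal{B}$. The Boolean quadruple system of order $2^m$ ($m\ge2$) is the design with point set $\mathbb{F}_2^m$ whose lines are the $4$-subsets $\{v_1,\dots,v_4\}$ with $\sum v_i=0$ (equivalently, the affine planes of $\mathbb{F}_2^m$); "$\mathcal{D}$ is"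 such a system means up to identification of the point set. *)

theory Defs
  imports Main "HOL-Library.Multiset" "HOL-Library.Z2"
begin

definition design_2_4 :: "'a set \<Rightarrow> 'a set multiset \<Rightarrow> nat \<Rightarrow> nat \<Rightarrow> bool" where
  "design_2_4 \<Omega> B n lam \<longleftrightarrow>
     finite \<Omega> \<and> card \<Omega> = n \<and>
     (\<forall>L\<in>#B. L \<subseteq> \<Omega> \<and> card L = 4) \<and>
     (\<forall>x\<in>\<Omega>. \<forall>y\<in>\<Omega>. x \<noteq> y \<longrightarrow> size (filter_mset (\<lambda>L. {x, y} \<subseteq> L) B) = lam)"

definition supersimple :: "'a set multiset \<Rightarrow> bool" where
  "supersimple B \<longleftrightarrow>
     (\<forall>L\<in>#B. count B L = 1) \<and>
     (\<forall>L1\<in>#B. \<forall>L2\<in>#B. L1 \<noteq> L2 \<longrightarrow> card (L1 \<inter> L2) \<le> 2)"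

definition prop_triangle :: "'a set multiset \<Rightarrow> bool" where
  "prop_triangle B \<longleftrightarrow>
     (\<forall>L1\<in>#B. \<forall>L2\<in>#B. card (L1 \<inter> L2) = 2 \<longrightarrow> (L1 - L2) \<union> (L2 - L1) \<in># B)"

text \<open>The elementary move [a,b] = (a,b) prod_i (a_i,b_i), written out as the function it is
  (the transpositions are disjoint): it swaps a and b, and for every line {a,b,a_i,b_i}
  through a and b swaps a_i and b_i; all other points are fixed. [a,a] = 1.\<close>
definition elem_move :: "'a set multiset \<Rightarrow> 'a \<Rightarrow> 'a \<Rightarrow> 'a \<Rightarrow> 'a" where
  "elem_move B a b x =
     (if a = b then x
      else if x = a then b
      else if x = b then a
      else if (\<exists>L\<in>#B. {a, b, x} \<subseteq> L)
           then (THE y. \<exists>L\<in>#B. {a, b, x} \<subseteq> L \<and> y \<in> L - {a, b, x})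
      else x)"

text \<open>[a_0,...,a_k] = [a_0,a_1]...[a_{k-1},a_k]; permutations act on the right and products
  are composed left to right, so as functions the product g h is h \<circ> g.\<close>
fun move_seq :: "'a set multiset \<Rightarrow> 'a list \<Rightarrow> 'a \<Rightarrow> 'a" where
  "move_seq B (a # b # xs) = move_seq B (b # xs) \<circ> elem_move B a b"
| "move_seq B _ = id"

definition L_inf :: "'a set \<Rightarrow> 'a set multiset \<Rightarrow> 'a \<Rightarrow> ('a \<Rightarrow> 'a) set" where
  "L_inf \<Omega> B pinf = {move_seq B (pinf # xs) | xs. set xs \<subseteq> \<Omega>}"

definition pi_inf :: "'a set \<Rightarrow> 'a set multiset \<Rightarrow> 'a \<Rightarrow> ('a \<Rightarrow> 'a) set" where
  "pi_inf \<Omega> B pinf = {move_seq B (pinf # xs @ [pinf]) | xs. set xs \<subseteq> \<Omega>}"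

definition elem_abelian_2group :: "('a \<Rightarrow> 'a) set \<Rightarrow> bool" where
  "elem_abelian_2group G \<longleftrightarrow>
     id \<in> G \<and> (\<forall>f\<in>G. \<forall>g\<in>G. f \<circ> g \<in> G) \<and>
     (\<forall>f\<in>G. f \<circ> f = id) \<and> (\<forall>f\<in>G. \<forall>g\<in>G. f \<circ> g = g \<circ> f)"

text \<open>F_2^m, realised as functions nat \<Rightarrow> bit vanishing outside {0..<m}.\<close>
definition F2vec :: "nat \<Rightarrow> (nat \<Rightarrow> bit) set" where
  "F2vec m = {v. \<forall>i\<ge>m. v i = 0}"

definition BQS_lines :: "nat \<Rightarrow> (nat \<Rightarrow> bit) set set" where
  "BQS_lines m = {{v1, v2, v3, v4} | v1 v2 v3 v4.
      v1 \<in> F2vec m \<and> v2 \<in> F2vec m \<and> v3 \<in> F2vec m \<and> v4 \<in> F2vec m \<and>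
      card {v1, v2, v3, v4} = 4 \<and> (\<forall>i. v1 i + v2 i + v3 i + v4 i = 0)}"

definition is_BQS :: "'a set \<Rightarrow> 'a set multiset \<Rightarrow> nat \<Rightarrow> bool" where
  "is_BQS \<Omega> B m \<longleftrightarrow>
     (\<exists>\<phi>. bij_betw \<phi> \<Omega> (F2vec m) \<and> image_mset (image \<phi>) B = mset_set (BQS_lines m))"

end

theory Submission
  imports Defs "HOL-Library.Function_Algebras"
begin

text \<open>
  In a supersimple 2-\<open>(2\<lambda> + 2, 4, \<lambda>)\<close> design the \<open>\<lambda>\<close> lines through two points \<open>a, b\<close>
  partition the remaining \<open>2\<lambda>\<close> points, so any three points lie on exactly one line and the move
  \<open>[a, b]\<close> sends \<open>x\<close> to the fourth point of the line through \<open>a, b, x\<close>. All three conditions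
  are equivalent to: on every line \<open>{a, b, c, d}\<close> the moves \<open>[a, b]\<close> and \<open>[c, d]\<close> coincide.
  Property (\<open>\<triangle>\<close>) gives this by comparing the lines through \<open>a, b, c\<close> and \<open>a, b, x\<close>.
  Conversely, it yields \<open>[a, b][b, c] = [a, c]\<close>, so every move sequence from \<open>\<infinity>\<close> telescopes to
  a single move \<open>[\<infinity>, x]\<close>: hence \<open>\<pi>\<^sub>\<infinity> = {1}\<close> and \<open>L\<^sub>\<infinity> = {[\<infinity>, x] | x \<in> \<Omega>}\<close> is elementary
  abelian of order \<open>|\<Omega>|\<close>. Moreover \<open>x + y := y[\<infinity>, x]\<close> makes \<open>\<Omega>\<close> an elementary abelian 2-group
  whose lines are exactly the zero-sum quadruples, so a basis identifies the design with a
  Boolean quadruple system, in which (\<open>\<triangle>\<close>) holds. Finally, if \<open>\<pi>\<^sub>\<infinity> = {1}\<close> and \<open>L\<^sub>\<infinity>\<close> is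
  elementary abelian, then \<open>L\<^sub>\<infinity>\<close> acts semiregularly and contains both \<open>[a, b]\<close> and \<open>[c, d]\<close>,
  which agree at \<open>c\<close>.
\<close>

section \<open>Boolean quadruple systems\<close>

lemma bitvec_add_self [simp]: "(v :: nat \<Rightarrow> bit) + v = 0"
  by (simp add: fun_eq_iff)

lemma bitvec_add_eq_0_iff: "(v :: nat \<Rightarrow> bit) + w = 0 \<longleftrightarrow> v = w"
  by (metis add_diff_cancel_left' bitvec_add_self diff_zero)

lemma F2vec_add: "v \<in> F2vec m \<Longrightarrow> w \<in> F2vec m \<Longrightarrow> v + w \<in> F2vec m"
  by (simp add: F2vec_def)

lemma bij_betw_F2vec_Pow: "bij_betw (\<lambda>v. {i. v i = 1}) (F2vec m) (Pow {..<m})"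
proof (rule bij_betw_byWitness[where f' = "\<lambda>S i. if i \<in> S then 1 else 0"])
  show "\<forall>v\<in>F2vec m. (\<lambda>i. if i \<in> {i. v i = 1} then 1 else 0) = v"
    by (auto simp: F2vec_def fun_eq_iff)
  show "(\<lambda>v. {i. v i = 1}) ` F2vec m \<subseteq> Pow {..<m}"
    by (auto simp: F2vec_def) (metis bit_not_one_iff linorder_not_less zero_neq_one)
qed (auto simp: F2vec_def)

lemma card_F2vec: "card (F2vec m) = 2 ^ m"
  using bij_betw_same_card[OF bij_betw_F2vec_Pow] by (simp add: card_Pow)

lemma finite_F2vec: "finite (F2vec m)"
  using bij_betw_finite[OF bij_betw_F2vec_Pow] by simp

lemma card_4_obtain:
  assumes "card X = 4"
  obtains a b c d where "X = {a, b, c, d}" "distinct [a, b, c, d]"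
proof -
  obtain d Y where "X = insert d Y" "d \<notin> Y" "card Y = 3"
    using assms card_eq_SucD[of X 3] by auto
  moreover obtain a b c where "Y = {a, b, c}" "a \<noteq> b" "b \<noteq> c" "a \<noteq> c"
    using \<open>card Y = 3\<close> card_3_iff by metis
  ultimately show ?thesis
    using that[of a b c d] by auto
qed

lemma mem_BQS_lines_iff: "X \<in> BQS_lines m \<longleftrightarrow> X \<subseteq> F2vec m \<and> card X = 4 \<and> \<Sum>X = 0"
proof -
  have zero_sum: "(\<forall>i. a i + b i + c i + d i = 0) \<longleftrightarrow> a + b + c + d = 0" for a b c d :: "nat \<Rightarrow> bit"
    by (simp add: fun_eq_iff del: add_bit_eq_xor)
  have card4: "card {a, b, c, d} = 4 \<longleftrightarrow> distinct [a, b, c, d]" for a b c d :: "nat \<Rightarrow> bit"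
    by (auto simp: card_insert_if)
  show ?thesis
  proof
    assume "X \<in> BQS_lines m"
    then show "X \<subseteq> F2vec m \<and> card X = 4 \<and> \<Sum>X = 0"
      unfolding BQS_lines_def zero_sum card4 by (auto simp: add.assoc)
  next
    assume X: "X \<subseteq> F2vec m \<and> card X = 4 \<and> \<Sum>X = 0"
    then obtain a b c d where "X = {a, b, c, d}" "distinct [a, b, c, d]"
      by (auto elim: card_4_obtain)
    moreover have "a + b + c + d = 0"
      using X \<open>X = {a, b, c, d}\<close> \<open>distinct [a, b, c, d]\<close> by (simp add: add.assoc)
    ultimately show "X \<in> BQS_lines m"
      using X unfolding BQS_lines_def zero_sum card4 mem_Collect_eq
      by (intro exI[of _ a] exI[of _ b] exI[of _ c] exI[of _ d]) simp
  qed
qed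

lemma quadruple_in_BQS_lines_iff:
  assumes "distinct [a, b, c, d]"
  shows "{a, b, c, d} \<in> BQS_lines m \<longleftrightarrow> {a, b, c, d} \<subseteq> F2vec m \<and> d = a + b + c"
proof -
  have "\<Sum>{a, b, c, d} = (a + b + c) + d"
    using assms by (simp add: add.assoc)
  then have "\<Sum>{a, b, c, d} = 0 \<longleftrightarrow> d = a + b + c"
    using bitvec_add_eq_0_iff[of "a + b + c" d] by auto
  moreover have "card {a, b, c, d} = 4"
    using assms by simp
  ultimately show ?thesis
    by (simp add: mem_BQS_lines_iff del: insert_subset)
qed

lemma finite_BQS_lines: "finite (BQS_lines m)"
  by (rule finite_subset[of _ "Pow (F2vec m)"]) (auto simp: mem_BQS_lines_iff finite_F2vec)

lemma BQS_lines_sym_diff: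
  assumes X: "X \<in> BQS_lines m" and Y: "Y \<in> BQS_lines m" and "card (X \<inter> Y) = 2"
  shows "(X - Y) \<union> (Y - X) \<in> BQS_lines m"
proof -
  have fin: "finite X" "finite Y" and sum0: "\<Sum>X = 0" "\<Sum>Y = 0" and card: "card X = 4" "card Y = 4"
    using X Y by (auto simp: mem_BQS_lines_iff intro: card_ge_0_finite)
  have "\<Sum>(X - Y) = \<Sum>(X \<inter> Y)"
    using sum.Int_Diff[OF fin(1), of "\<lambda>v. v" Y] sum0(1) by (simp add: bitvec_add_eq_0_iff)
  moreover have "\<Sum>(Y - X) = \<Sum>(X \<inter> Y)"
    using sum.Int_Diff[OF fin(2), of "\<lambda>v. v" X] sum0(2) by (simp add: bitvec_add_eq_0_iff Int_commute)
  moreover have "card (X - Y) = 2" "card (Y - X) = 2"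
    using card_Diff_subset_Int[of X Y] card_Diff_subset_Int[of Y X] fin card assms(3)
    by (simp_all add: Int_commute)
  moreover have "(X - Y) \<inter> (Y - X) = {}"
    by blast
  ultimately have "card ((X - Y) \<union> (Y - X)) = 4" "\<Sum>((X - Y) \<union> (Y - X)) = 0"
    using fin by (simp_all add: card_Un_disjoint sum.union_disjoint)
  then show ?thesis
    using X Y by (auto simp: mem_BQS_lines_iff)
qed

lemma prop_triangle_if_is_BQS:
  assumes "is_BQS \<Omega> B m" and lines: "\<forall>L\<in>#B. L \<subseteq> \<Omega>"
  shows "prop_triangle B"
  unfolding prop_triangle_def
proof (intro ballI impI)
  obtain \<phi> where bij: "bij_betw \<phi> \<Omega> (F2vec m)" and B: "image_mset (image \<phi>) B = mset_set (BQS_lines m)"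
    using assms(1) unfolding is_BQS_def by blast
  have inj: "inj_on \<phi> \<Omega>"
    using bij by (rule bij_betw_imp_inj_on)
  have image_lines: "BQS_lines m = image \<phi> ` set_mset B"
    using arg_cong[OF B, of set_mset] finite_BQS_lines by simp
  fix L1 L2 assume L: "L1 \<in># B" "L2 \<in># B" and "card (L1 \<inter> L2) = 2"
  have sub: "L1 \<subseteq> \<Omega>" "L2 \<subseteq> \<Omega>"
    using L lines by auto
  have "card (\<phi> ` L1 \<inter> \<phi> ` L2) = 2"
    using \<open>card (L1 \<inter> L2) = 2\<close> inj sub
    by (metis card_image inj_on_image_Int inj_on_subset le_infI1)
  moreover have "\<phi> ` L1 \<in> BQS_lines m" "\<phi> ` L2 \<in> BQS_lines m"
    unfolding image_lines using L by simp_all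
  ultimately have "(\<phi> ` L1 - \<phi> ` L2) \<union> (\<phi> ` L2 - \<phi> ` L1) \<in> BQS_lines m"
    using BQS_lines_sym_diff by blast
  also have "(\<phi> ` L1 - \<phi> ` L2) \<union> (\<phi> ` L2 - \<phi> ` L1) = \<phi> ` ((L1 - L2) \<union> (L2 - L1))"
  proof -
    have "L1 - L2 \<subseteq> \<Omega>" "L2 - L1 \<subseteq> \<Omega>"
      using sub by auto
    then show ?thesis
      using inj_on_image_set_diff[OF inj, of L1 L2] inj_on_image_set_diff[OF inj, of L2 L1] sub
      by (simp add: image_Un)
  qed
  finally obtain L where "L \<in># B" "\<phi> ` L = \<phi> ` ((L1 - L2) \<union> (L2 - L1))"
    unfolding image_lines by auto
  moreover have "L \<subseteq> \<Omega>" "(L1 - L2) \<union> (L2 - L1) \<subseteq> \<Omega>"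
    using calculation(1) lines sub by auto
  ultimately have "L = (L1 - L2) \<union> (L2 - L1)"
    using inj_on_image_eq_iff[OF inj] by simp
  with \<open>L \<in># B\<close> show "(L1 - L2) \<union> (L2 - L1) \<in># B"
    by simp
qed

lemma mset_set_set_mset_eq: "(\<forall>L\<in>#B. count B L = 1) \<Longrightarrow> mset_set (set_mset B) = B"
  by (rule multiset_eqI) (simp add: count_mset_set' not_in_iff)

lemma is_BQSI:
  assumes bij: "bij_betw \<psi> (F2vec m) \<Omega>" and lines: "image \<psi> ` BQS_lines m = set_mset B"
    and simple: "\<forall>L\<in>#B. count B L = 1"
  shows "is_BQS \<Omega> B m"
proof -
  have inj: "inj_on \<psi> (F2vec m)"
    using bij by (rule bij_betw_imp_inj_on)
  have sub: "X \<subseteq> F2vec m" if "X \<in> BQS_lines m" for X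
    using that by (simp add: mem_BQS_lines_iff)
  have "inj_on (image \<psi>) (BQS_lines m)"
    using inj sub by (auto intro!: inj_onI simp: inj_on_image_eq_iff)
  then have B: "B = image_mset (image \<psi>) (mset_set (BQS_lines m))"
    using lines mset_set_set_mset_eq[OF simple] by (simp add: image_mset_mset_set)
  define \<phi> where "\<phi> = inv_into (F2vec m) \<psi>"
  have "image_mset (image \<phi>) B = image_mset (\<lambda>X. \<phi> ` \<psi> ` X) (mset_set (BQS_lines m))"
    by (simp add: B multiset.map_comp comp_def)
  also have "\<dots> = image_mset id (mset_set (BQS_lines m))"
    by (rule image_mset_cong) (simp add: \<phi>_def inv_into_image_cancel inj sub finite_BQS_lines)
  finally have "image_mset (image \<phi>) B = mset_set (BQS_lines m)"
    by simp
  then show ?thesis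
    unfolding is_BQS_def \<phi>_def using bij_betw_inv_into[OF bij] by blast
qed

section \<open>Bases of finite elementary abelian 2-groups\<close>

locale boolean_group =
  fixes S :: "'a set" and add :: "'a \<Rightarrow> 'a \<Rightarrow> 'a" (infixl \<open>\<oplus>\<close> 65) and zero :: 'a
  assumes add_closed: "x \<in> S \<Longrightarrow> y \<in> S \<Longrightarrow> x \<oplus> y \<in> S"
    and zero_closed: "zero \<in> S"
    and add_zero: "x \<in> S \<Longrightarrow> x \<oplus> zero = x"
    and add_self: "x \<in> S \<Longrightarrow> x \<oplus> x = zero"
    and add_commute: "x \<in> S \<Longrightarrow> y \<in> S \<Longrightarrow> x \<oplus> y = y \<oplus> x"
    and add_assoc: "x \<in> S \<Longrightarrow> y \<in> S \<Longrightarrow> w \<in> S \<Longrightarrow> x \<oplus> y \<oplus> w = x \<oplus> (y \<oplus> w)"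
begin

lemma add_cancel: "x \<in> S \<Longrightarrow> y \<in> S \<Longrightarrow> x \<oplus> y \<oplus> y = x"
  by (simp add: add_assoc add_self add_zero)

lemma add_left_commute: "x \<in> S \<Longrightarrow> y \<in> S \<Longrightarrow> w \<in> S \<Longrightarrow> x \<oplus> (y \<oplus> w) = y \<oplus> (x \<oplus> w)"
  by (metis add_assoc add_commute)

primrec lincomb :: "(nat \<Rightarrow> 'a) \<Rightarrow> nat \<Rightarrow> (nat \<Rightarrow> bit) \<Rightarrow> 'a" where
  "lincomb g 0 v = zero"
| "lincomb g (Suc k) v = (if v k = 1 then lincomb g k v \<oplus> g k else lincomb g k v)"

lemma lincomb_closed: "(\<And>i. i < k \<Longrightarrow> g i \<in> S) \<Longrightarrow> lincomb g k v \<in> S"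
  by (induction k) (auto simp: zero_closed add_closed)

lemma lincomb_cong:
  "(\<And>i. i < k \<Longrightarrow> g i = h i) \<Longrightarrow> (\<And>i. i < k \<Longrightarrow> v i = w i) \<Longrightarrow> lincomb g k v = lincomb h k w"
  by (induction k) auto

lemma lincomb_add:
  assumes "\<And>i. i < k \<Longrightarrow> g i \<in> S"
  shows "lincomb g k (v + w) = lincomb g k v \<oplus> lincomb g k w"
  using assms
proof (induction k)
  case 0
  show ?case
    by (simp add: add_zero zero_closed)
next
  case (Suc k)
  have closed: "lincomb g k v \<in> S" "lincomb g k w \<in> S" "g k \<in> S"
    using Suc.prems lincomb_closed by auto
  have IH: "lincomb g k (v + w) = lincomb g k v \<oplus> lincomb g k w"
    by (rule Suc.IH) (simp add: Suc.prems)
  have "lincomb g (Suc k) (v + w) = (if v k + w k = 1 then lincomb g k v \<oplus> lincomb g k w \<oplus> g k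
      else lincomb g k v \<oplus> lincomb g k w)"
    by (simp only: lincomb.simps IH plus_fun_apply)
  also have "\<dots> = lincomb g (Suc k) v \<oplus> lincomb g (Suc k) w"
    using closed
    by (cases "v k"; cases "w k")
       (simp_all add: add_closed add_assoc, (metis add_commute add_left_commute add_closed add_cancel)+)
  finally show ?case .
qed

lemma inj_on_lincomb_extend:
  assumes g: "\<And>i. i < k \<Longrightarrow> g i \<in> S" and inj: "inj_on (lincomb g k) (F2vec k)"
    and h: "h \<in> S" "h \<notin> lincomb g k ` F2vec k"
  shows "inj_on (lincomb (g(k := h)) (Suc k)) (F2vec (Suc k))"
proof (rule inj_onI)
  define trunc :: "(nat \<Rightarrow> bit) \<Rightarrow> nat \<Rightarrow> bit" where "trunc v = v(k := 0)" for v
  have trunc_F2vec: "trunc v \<in> F2vec k" if "v \<in> F2vec (Suc k)" for v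
    using that by (simp add: F2vec_def trunc_def)
  have closed: "lincomb g k v \<in> S" for v
    using g by (rule lincomb_closed)
  have extend: "lincomb (g(k := h)) (Suc k) v =
      (if v k = 1 then lincomb g k (trunc v) \<oplus> h else lincomb g k (trunc v))" for v
    using lincomb_cong[of k "g(k := h)" g v "trunc v"] by (simp add: trunc_def)
  have not_shifted: "lincomb g k (trunc v) \<oplus> h \<noteq> lincomb g k (trunc w)"
    if "v \<in> F2vec (Suc k)" "w \<in> F2vec (Suc k)" for v w
  proof
    assume "lincomb g k (trunc v) \<oplus> h = lincomb g k (trunc w)"
    then have "h = lincomb g k (trunc v) \<oplus> lincomb g k (trunc w)"
      using closed h(1) by (metis add_cancel add_commute)
    also have "\<dots> = lincomb g k (trunc v + trunc w)"
      using g by (simp add: lincomb_add)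
    finally show False
      using h(2) F2vec_add trunc_F2vec that by blast
  qed
  fix v w assume v: "v \<in> F2vec (Suc k)" and w: "w \<in> F2vec (Suc k)"
    and eq: "lincomb (g(k := h)) (Suc k) v = lincomb (g(k := h)) (Suc k) w"
  have "v k = w k"
    using eq not_shifted[OF v w] not_shifted[OF w v] unfolding extend by (auto split: if_splits)
  moreover have "lincomb g k (trunc v) = lincomb g k (trunc w)"
    using eq closed h(1) \<open>v k = w k\<close> unfolding extend by (metis add_cancel)
  then have "trunc v = trunc w"
    using inj trunc_F2vec v w by (meson inj_onD)
  ultimately show "v = w"
    by (metis fun_upd_triv fun_upd_upd trunc_def)
qed

lemma ex_bij_lincomb:
  assumes "finite S"
  obtains k g where "\<And>i. i < k \<Longrightarrow> g i \<in> S" "bij_betw (lincomb g k) (F2vec k) S"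
proof -
  define independent where "independent = (\<lambda>(k, g). (\<forall>i<k. g i \<in> S) \<and> inj_on (lincomb g k) (F2vec k))"
  have "independent (0, g)" for g
    unfolding independent_def by (auto simp: F2vec_def fun_eq_iff intro: inj_onI)
  moreover have "fst kg < Suc (card S)" if "independent kg" for kg
  proof -
    obtain k g where kg: "kg = (k, g)" "\<forall>i<k. g i \<in> S" "inj_on (lincomb g k) (F2vec k)"
      using \<open>independent kg\<close> unfolding independent_def by auto
    then have "2 ^ k \<le> card S"
      using card_inj_on_le[of "lincomb g k" "F2vec k" S] assms lincomb_closed
      by (simp add: card_F2vec image_subset_iff)
    then have "k < Suc (card S)"
      using less_exp[of k] by linarith
    then show ?thesis
      using kg(1) by simp
  qed
  ultimately obtain kg where max: "independent kg"
    and greatest: "\<And>kg'. independent kg' \<Longrightarrow> fst kg' \<le> fst kg"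
    using ex_has_greatest_nat[of independent "(0, undefined)" fst "Suc (card S)"] by blast
  obtain k g where "kg = (k, g)"
    by fastforce
  with max have g: "\<And>i. i < k \<Longrightarrow> g i \<in> S" and inj: "inj_on (lincomb g k) (F2vec k)"
    by (simp_all add: independent_def)
  have "lincomb g k ` F2vec k = S"
  proof (rule ccontr)
    assume "lincomb g k ` F2vec k \<noteq> S"
    moreover have "lincomb g k ` F2vec k \<subseteq> S"
      using lincomb_closed[OF g] by (rule image_subsetI)
    ultimately obtain h where "h \<in> S" "h \<notin> lincomb g k ` F2vec k"
      by blast
    then have "independent (Suc k, g(k := h))"
      using inj_on_lincomb_extend[OF g inj] g by (simp add: independent_def less_Suc_eq)
    then show False
      using greatest[of "(Suc k, g(k := h))"] \<open>kg = (k, g)\<close> by simp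
  qed
  then show ?thesis
    using that[OF g] inj by (simp add: bij_betw_def)
qed

end

section \<open>Supersimple designs with \<open>n = 2\<lambda> + 2\<close>\<close>

locale sqs_design =
  fixes \<Omega> :: "'a set" and B :: "'a set multiset" and lam :: nat
  assumes design: "design_2_4 \<Omega> B (2 * lam + 2) lam" and simple: "supersimple B"
begin

abbreviation move :: "'a \<Rightarrow> 'a \<Rightarrow> 'a \<Rightarrow> 'a" where
  "move \<equiv> elem_move B"

lemma finite_points: "finite \<Omega>"
  using design by (simp add: design_2_4_def)

lemma card_points: "card \<Omega> = 2 * lam + 2"
  using design by (simp add: design_2_4_def)

lemma line_subset: "L \<in># B \<Longrightarrow> L \<subseteq> \<Omega>"
  using design by (simp add: design_2_4_def)

lemma card_line: "L \<in># B \<Longrightarrow> card L = 4"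
  using design by (simp add: design_2_4_def)

lemma count_line: "L \<in># B \<Longrightarrow> count B L = 1"
  using simple by (simp add: supersimple_def)

lemma card_lines_through:
  "x \<in> \<Omega> \<Longrightarrow> y \<in> \<Omega> \<Longrightarrow> x \<noteq> y \<Longrightarrow> card {L \<in> set_mset B. {x, y} \<subseteq> L} = lam"
proof -
  have "filter_mset (\<lambda>L. {x, y} \<subseteq> L) B = mset_set {L \<in> set_mset B. {x, y} \<subseteq> L}"
    by (rule multiset_eqI) (simp add: count_line count_mset_set' not_in_iff)
  then show "x \<in> \<Omega> \<Longrightarrow> y \<in> \<Omega> \<Longrightarrow> x \<noteq> y \<Longrightarrow> ?thesis"
    using design unfolding design_2_4_def by (metis finite_set_mset finite_filter size_mset_set)
qed

lemma finite_line: "L \<in># B \<Longrightarrow> finite L"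
  using finite_points line_subset finite_subset by blast

lemma line_eqI:
  assumes "L1 \<in># B" "L2 \<in># B" "{a, b, x} \<subseteq> L1" "{a, b, x} \<subseteq> L2" "distinct [a, b, x]"
  shows "L1 = L2"
proof (rule ccontr)
  assume "L1 \<noteq> L2"
  then have "card (L1 \<inter> L2) \<le> 2"
    using simple assms(1,2) by (simp add: supersimple_def)
  moreover have "card {a, b, x} \<le> card (L1 \<inter> L2)"
    using assms by (intro card_mono) (auto intro: finite_line)
  ultimately show False
    using assms(5) by simp
qed

text \<open>The \<open>\<lambda>\<close> lines through \<open>a\<close> and \<open>b\<close> meet pairwise only in \<open>{a, b}\<close>, so their
  remaining points are \<open>2 * \<lambda>\<close> distinct points, which exhaust \<open>\<Omega> - {a, b}\<close>.\<close>
lemma ex_line_through: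
  assumes "a \<in> \<Omega>" "b \<in> \<Omega>" "x \<in> \<Omega>" "distinct [a, b, x]"
  shows "\<exists>L\<in>#B. {a, b, x} \<subseteq> L"
proof -
  define S where "S = {L \<in> set_mset B. {a, b} \<subseteq> L}"
  have card_rest: "card (L - {a, b}) = 2" if "L \<in> S" for L
    using that card_line finite_line assms(4) unfolding S_def by (simp add: card_Diff_subset)
  have disjoint: "(L - {a, b}) \<inter> (L' - {a, b}) = {}" if "L \<in> S" "L' \<in> S" "L \<noteq> L'" for L L'
  proof (rule ccontr)
    assume "(L - {a, b}) \<inter> (L' - {a, b}) \<noteq> {}"
    then obtain y where "y \<in> L" "y \<in> L'" "y \<notin> {a, b}"
      by blast
    then have "L = L'"
      using that(1,2) assms(4) line_eqI[of L L' a b y] unfolding S_def by auto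
    with that(3) show False ..
  qed
  have "card (\<Union>L\<in>S. L - {a, b}) = (\<Sum>L\<in>S. card (L - {a, b}))"
    using disjoint finite_line by (intro card_UN_disjoint) (auto simp: S_def)
  also have "\<dots> = 2 * lam"
    using card_rest card_lines_through[OF assms(1,2)] assms(4) by (simp add: S_def)
  also have "\<dots> = card (\<Omega> - {a, b})"
    using assms card_points finite_points by (simp add: card_Diff_subset)
  finally have "(\<Union>L\<in>S. L - {a, b}) = \<Omega> - {a, b}"
    using finite_points line_subset by (intro card_subset_eq) (auto simp: S_def)
  then have "x \<in> (\<Union>L\<in>S. L - {a, b})"
    using assms by auto
  then show ?thesis
    unfolding S_def by auto
qed

lemma move_eq_fourth_point:
  assumes "L \<in># B" "{a, b, x} \<subseteq> L" "distinct [a, b, x]"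
  shows "L = {a, b, x, move a b x}" "move a b x \<notin> {a, b, x}"
proof -
  have "card (L - {a, b, x}) = 1"
    using assms card_line finite_line by (simp add: card_Diff_subset)
  then obtain y where y: "L - {a, b, x} = {y}"
    by (rule card_1_singletonE)
  have "(THE y. \<exists>L\<in>#B. {a, b, x} \<subseteq> L \<and> y \<in> L - {a, b, x}) = y"
  proof (rule the_equality)
    show "\<exists>L\<in>#B. {a, b, x} \<subseteq> L \<and> y \<in> L - {a, b, x}"
      using assms(1,2) y by blast
  next
    fix z assume "\<exists>L'\<in>#B. {a, b, x} \<subseteq> L' \<and> z \<in> L' - {a, b, x}"
    then obtain L' where "L' \<in># B" "{a, b, x} \<subseteq> L'" "z \<in> L' - {a, b, x}"
      by blast
    moreover have "L' = L"
      using line_eqI calculation(1,2) assms by blast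
    ultimately show "z = y"
      using y by blast
  qed
  then have "move a b x = y"
    using assms by (auto simp: elem_move_def)
  then show "L = {a, b, x, move a b x}" "move a b x \<notin> {a, b, x}"
    using y assms(2) by auto
qed

lemma move_refl [simp]: "move a a = id"
  by (simp add: elem_move_def fun_eq_iff)

lemma move_left [simp]: "move a b a = b"
  by (simp add: elem_move_def)

lemma move_right [simp]: "move a b b = a"
  by (simp add: elem_move_def)

lemma move_commute: "move a b = move b a"
  by (auto simp: elem_move_def fun_eq_iff insert_commute)

lemma move_outside: "x \<notin> \<Omega> \<Longrightarrow> a \<in> \<Omega> \<Longrightarrow> b \<in> \<Omega> \<Longrightarrow> move a b x = x"
  using line_subset by (auto simp: elem_move_def)

lemma line_through_move:
  assumes "a \<in> \<Omega>" "b \<in> \<Omega>" "x \<in> \<Omega>" "distinct [a, b, x]"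
  shows "{a, b, x, move a b x} \<in># B" "move a b x \<notin> {a, b, x}"
  using ex_line_through[OF assms] move_eq_fourth_point assms(4) by metis+

lemma move_eqI:
  assumes "{a, b, x, y} \<in># B" "distinct [a, b, x, y]"
  shows "move a b x = y"
  using move_eq_fourth_point[OF assms(1), of a b x] assms(2) by auto

lemma move_closed:
  assumes "a \<in> \<Omega>" "b \<in> \<Omega>" "x \<in> \<Omega>"
  shows "move a b x \<in> \<Omega>"
proof (cases "distinct [a, b, x]")
  case True
  then show ?thesis
    using line_through_move(1)[OF assms True] line_subset by blast
qed (use assms in \<open>auto simp: move_commute\<close>)

lemma move_swap:
  assumes "a \<in> \<Omega>" "b \<in> \<Omega>" "x \<in> \<Omega>"
  shows "move a b x = move a x b"
proof (cases "distinct [a, b, x]")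
  case True
  then have "{a, x, b, move a b x} \<in># B" "distinct [a, x, b, move a b x]"
    using line_through_move[OF assms True] by (auto simp: insert_commute)
  then show ?thesis
    by (rule move_eqI[symmetric])
qed (auto simp: move_commute)

lemma move_move:
  assumes "a \<in> \<Omega>" "b \<in> \<Omega>"
  shows "move a b (move a b x) = x"
proof (cases "x \<in> \<Omega> \<and> distinct [a, b, x]")
  case True
  then have "{a, b, x, move a b x} \<in># B" "move a b x \<notin> {a, b, x}"
    using line_through_move assms by auto
  then have "{a, b, move a b x, x} \<in># B" "distinct [a, b, move a b x, x]"
    using True by (auto simp: insert_commute)
  then show ?thesis
    by (rule move_eqI)
qed (auto simp: assms move_outside)

lemma move_involution: "a \<in> \<Omega> \<Longrightarrow> b \<in> \<Omega> \<Longrightarrow> move a b \<circ> move a b = id"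
  by (simp add: fun_eq_iff move_move)

lemma move_no_fixpoint:
  assumes "a \<in> \<Omega>" "b \<in> \<Omega>" "x \<in> \<Omega>" "a \<noteq> b"
  shows "move a b x \<noteq> x"
proof (cases "x = a \<or> x = b")
  case False
  then show ?thesis
    using line_through_move(2)[OF assms(1-3)] assms(4) by auto
qed (use assms(4) in auto)

lemma line_obtain:
  assumes "L \<in># B"
  obtains a b c where "a \<in> \<Omega>" "b \<in> \<Omega>" "c \<in> \<Omega>" "distinct [a, b, c]" "L = {a, b, c, move a b c}"
proof -
  obtain a b c d where "L = {a, b, c, d}" "distinct [a, b, c, d]"
    using card_line[OF assms] by (rule card_4_obtain)
  moreover have "L = {a, b, c, move a b c}"
    using move_eq_fourth_point(1)[OF assms, of a b c] calculation by auto
  ultimately show ?thesis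
    using that[of a b c] line_subset[OF assms] by auto
qed

definition moves_agree :: bool where
  "moves_agree \<longleftrightarrow> (\<forall>a\<in>\<Omega>. \<forall>b\<in>\<Omega>. \<forall>c\<in>\<Omega>. move c (move a b c) = move a b)"

lemma moves_agree_if_triangle:
  assumes triangle: "prop_triangle B"
  shows moves_agree
  unfolding moves_agree_def
proof (intro ballI)
  fix a b c assume abc: "a \<in> \<Omega>" "b \<in> \<Omega>" "c \<in> \<Omega>"
  show "move c (move a b c) = move a b"
  proof (cases "distinct [a, b, c]")
    case True
    define d where "d = move a b c"
    have line1: "{a, b, c, d} \<in># B" "distinct [a, b, c, d]"
      using line_through_move[OF abc True] True by (auto simp: d_def)
    have "move c d x = move a b x" for x
    proof (cases "x \<in> \<Omega> - {a, b, c, d}")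
      case True
      define y where "y = move a b x"
      have line2: "{a, b, x, y} \<in># B" "y \<notin> {a, b, x}"
        using line_through_move[of a b x] abc True line1(2) by (auto simp: y_def)
      have "y \<notin> {c, d}"
        using line_eqI[OF line2(1) line1(1), of a b] line_eqI[OF line2(1) line1(1), of a b d]
          True line1(2) line2(2) by auto
      then have inter: "{a, b, c, d} \<inter> {a, b, x, y} = {a, b}" and "distinct [c, d, x, y]"
        using True line1(2) line2(2) \<open>y \<notin> {c, d}\<close> by auto
      then have "card ({a, b, c, d} \<inter> {a, b, x, y}) = 2"
        using line1(2) by simp
      then have "({a, b, c, d} - {a, b, x, y}) \<union> ({a, b, x, y} - {a, b, c, d}) \<in># B"
        using triangle line1(1) line2(1) unfolding prop_triangle_def by blast
      also have "({a, b, c, d} - {a, b, x, y}) \<union> ({a, b, x, y} - {a, b, c, d}) = {c, d, x, y}"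
        using True line1(2) line2(2) \<open>y \<notin> {c, d}\<close> by auto
      finally show ?thesis
        using move_eqI \<open>distinct [c, d, x, y]\<close> y_def by auto
    next
      case False
      have "{c, d, a, b} \<in># B" "{c, d, b, a} \<in># B" "{a, b, d, c} \<in># B"
        using line1(1) by (simp_all add: insert_commute)
      then have "move c d a = b" "move c d b = a" "move a b d = c"
        using line1(2) by (auto intro: move_eqI)
      then show ?thesis
        using False abc move_outside[of x c d] move_outside[of x a b] line1 move_closed
        by (auto simp: d_def)
    qed
    then show ?thesis
      by (simp add: d_def fun_eq_iff)
  qed (auto simp: move_commute)
qed

lemma triangle_if_moves_agree:
  assumes moves_agree
  shows "prop_triangle B"
  unfolding prop_triangle_def
proof (intro ballI impI)
  fix L1 L2 assume L: "L1 \<in># B" "L2 \<in># B" and "card (L1 \<inter> L2) = 2"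
  then obtain a b where ab: "L1 \<inter> L2 = {a, b}" "a \<noteq> b"
    by (meson card_2_iff)
  have "{a, b} \<subseteq> L1" "{a, b} \<subseteq> L2"
    using ab(1) by blast+
  then have "card (L1 - {a, b}) = 2" "card (L2 - {a, b}) = 2"
    using ab(2) L card_line finite_line by (simp_all add: card_Diff_subset)
  then obtain c d x y where cd: "L1 - {a, b} = {c, d}" "c \<noteq> d" and xy: "L2 - {a, b} = {x, y}" "x \<noteq> y"
    by (meson card_2_iff)
  have L1: "L1 = {a, b, c, d}" and L2: "L2 = {a, b, x, y}"
    using ab cd xy by blast+
  have distinct: "distinct [a, b, c, d]" "distinct [a, b, x, y]" "distinct [c, d, x, y]"
    using ab cd xy L1 L2 by auto
  have points: "a \<in> \<Omega>" "b \<in> \<Omega>" "c \<in> \<Omega>" "x \<in> \<Omega>"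
    using line_subset L L1 L2 by blast+
  have "move a b c = d"
    using move_eqI L(1) L1 distinct(1) by blast
  moreover have "move c (move a b c) = move a b"
    using assms points unfolding moves_agree_def by blast
  ultimately have "move c d x = move a b x"
    by simp
  also have "\<dots> = y"
    using move_eqI L(2) L2 distinct(2) by blast
  finally have "{c, d, x, y} \<in># B"
    using line_through_move(1)[of c d x] points line_subset[OF L(1)] L1 distinct(3) by auto
  moreover have "(L1 - L2) \<union> (L2 - L1) = {c, d, x, y}"
    using L1 L2 ab distinct by auto
  ultimately show "(L1 - L2) \<union> (L2 - L1) \<in># B"
    by simp
qed

lemma move_comp:
  assumes moves_agree and points: "a \<in> \<Omega>" "b \<in> \<Omega>" "c \<in> \<Omega>"
  shows "move b c \<circ> move a b = move a c"
proof
  fix x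
  show "(move b c \<circ> move a b) x = move a c x"
  proof (cases "x \<in> \<Omega>")
    case True
    have "(move b c \<circ> move a b) x = move b (move a b x) c"
      using move_swap move_closed points True by simp
    also have "\<dots> = move b (move a x b) c"
      using move_swap points True by simp
    also have "\<dots> = move a x c"
      using assms True unfolding moves_agree_def by simp
    also have "\<dots> = move a c x"
      using move_swap points True by simp
    finally show ?thesis .
  qed (simp add: points move_outside)
qed

lemma move_seq_closed: "set xs \<subseteq> \<Omega> \<Longrightarrow> x \<in> \<Omega> \<Longrightarrow> move_seq B xs x \<in> \<Omega>"
  by (induction xs arbitrary: x rule: induct_list012) (auto simp: move_closed)

lemma move_seq_telescope:
  assumes moves_agree
  shows "a \<in> \<Omega> \<Longrightarrow> set xs \<subseteq> \<Omega> \<Longrightarrow> move_seq B (a # xs) = move a (last (a # xs))"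
proof (induction xs arbitrary: a)
  case (Cons b ys)
  then have "move_seq B (a # b # ys) = move b (last (b # ys)) \<circ> move a b"
    by simp
  also have "\<dots> = move a (last (b # ys))"
    using move_comp[OF assms] Cons.prems last_in_set[of "b # ys"] by auto
  finally show ?case
    by simp
qed simp

lemma move_seq_snoc: "xs \<noteq> [] \<Longrightarrow> move_seq B (xs @ [y]) = move (last xs) y \<circ> move_seq B xs"
  by (induction xs rule: induct_list012) auto

lemma move_in_L_inf: "x \<in> \<Omega> \<Longrightarrow> move p x \<in> L_inf \<Omega> B p"
  unfolding L_inf_def by (rule CollectI, rule exI[of _ "[x]"]) simp

lemma L_inf_eq:
  assumes moves_agree and "p \<in> \<Omega>"
  shows "L_inf \<Omega> B p = move p ` \<Omega>"
proof
  show "L_inf \<Omega> B p \<subseteq> move p ` \<Omega>"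
  proof
    fix f assume "f \<in> L_inf \<Omega> B p"
    then obtain xs where "f = move_seq B (p # xs)" "set xs \<subseteq> \<Omega>"
      unfolding L_inf_def by blast
    moreover have "last (p # xs) \<in> \<Omega>"
      using calculation(2) assms(2) last_in_set[of "p # xs"] by auto
    ultimately show "f \<in> move p ` \<Omega>"
      using move_seq_telescope[OF assms] by simp
  qed
qed (auto intro: move_in_L_inf)

lemma pi_inf_eq:
  assumes moves_agree and "p \<in> \<Omega>"
  shows "pi_inf \<Omega> B p = {id}"
proof -
  have "move_seq B (p # xs @ [p]) = id" if "set xs \<subseteq> \<Omega>" for xs
    using move_seq_telescope[OF assms(1,2), of "xs @ [p]"] that assms(2) by simp
  moreover have "move_seq B (p # [] @ [p]) = id"
    by simp
  ultimately show ?thesis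
    unfolding pi_inf_def by (auto intro!: exI[of _ "[]"])
qed

lemma move_base_comp:
  assumes moves_agree and "p \<in> \<Omega>" "x \<in> \<Omega>" "y \<in> \<Omega>"
  shows "move p x \<circ> move p y = move x y"
  using move_comp[OF assms(1,4,2,3)] by (simp add: move_commute)

lemma elem_abelian_L_inf:
  assumes moves_agree and p: "p \<in> \<Omega>"
  shows "elem_abelian_2group (L_inf \<Omega> B p)"
  unfolding elem_abelian_2group_def L_inf_eq[OF assms]
proof (intro conjI ballI)
  show "id \<in> move p ` \<Omega>"
    using p move_refl by (metis image_eqI)
next
  fix f g assume "f \<in> move p ` \<Omega>" "g \<in> move p ` \<Omega>"
  then obtain x y where xy: "x \<in> \<Omega>" "y \<in> \<Omega>" "f = move p x" "g = move p y"
    by blast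
  have fg: "f \<circ> g = move x y" and gf: "g \<circ> f = move y x"
    using move_base_comp[OF assms] xy by simp_all
  have "move x y = move p (move y x p)"
    using assms xy unfolding moves_agree_def by (metis move_commute)
  then show "f \<circ> g \<in> move p ` \<Omega>"
    using fg move_closed p xy(1,2) by auto
  show "f \<circ> g = g \<circ> f"
    unfolding fg gf by (rule move_commute)
next
  fix f assume "f \<in> move p ` \<Omega>"
  then show "f \<circ> f = id"
    using move_involution p by blast
qed

lemma card_L_inf:
  assumes moves_agree and "p \<in> \<Omega>"
  shows "card (L_inf \<Omega> B p) = card \<Omega>"
proof -
  have "inj_on (move p) \<Omega>"
    by (rule inj_onI) (metis move_left)
  then show ?thesis
    unfolding L_inf_eq[OF assms] by (rule card_image)
qed

lemma L_inf_closed: "f \<in> L_inf \<Omega> B p \<Longrightarrow> p \<in> \<Omega> \<Longrightarrow> x \<in> \<Omega> \<Longrightarrow> f x \<in> \<Omega>"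
  unfolding L_inf_def using move_seq_closed by auto

lemma move_in_L_inf_group:
  assumes G: "elem_abelian_2group (L_inf \<Omega> B p)" and points: "p \<in> \<Omega>" "a \<in> \<Omega>" "b \<in> \<Omega>"
  shows "move a b \<in> L_inf \<Omega> B p"
proof -
  have "move a b \<circ> move p a = move_seq B [p, a, b]"
    by simp
  also have "\<dots> \<in> L_inf \<Omega> B p"
    unfolding L_inf_def using points by (auto intro!: exI[of _ "[a, b]"])
  finally have "move a b \<circ> move p a \<circ> move p a \<in> L_inf \<Omega> B p"
    using G move_in_L_inf[OF points(2)] unfolding elem_abelian_2group_def by blast
  then show ?thesis
    by (simp add: comp_assoc move_involution points)
qed

lemma L_inf_fixing_base_point:
  assumes pi: "pi_inf \<Omega> B p = {id}" and "p \<in> \<Omega>" and f: "f \<in> L_inf \<Omega> B p" and "f p = p"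
  shows "f = id"
proof -
  obtain xs where xs: "f = move_seq B (p # xs)" "set xs \<subseteq> \<Omega>"
    using f unfolding L_inf_def by blast
  show ?thesis
  proof (cases "xs = []")
    case False
    define z where "z = last xs"
    have "z \<in> \<Omega>"
      using False xs(2) by (auto simp: z_def)
    have "move z p \<circ> f = move_seq B ((p # xs) @ [p])"
      using move_seq_snoc[of "p # xs" p] False xs(1) by (simp add: z_def)
    also have "\<dots> \<in> pi_inf \<Omega> B p"
      unfolding pi_inf_def using xs(2) by auto
    finally have "move z p \<circ> (move z p \<circ> f) = move z p"
      using pi by simp
    then have "f = move z p"
      using move_involution[OF \<open>z \<in> \<Omega>\<close> \<open>p \<in> \<Omega>\<close>] by (simp add: comp_assoc[symmetric])
    then show ?thesis
      using \<open>f p = p\<close> by simp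
  qed (simp add: xs)
qed

lemma L_inf_semiregular:
  assumes pi: "pi_inf \<Omega> B p = {id}" and G: "elem_abelian_2group (L_inf \<Omega> B p)" and p: "p \<in> \<Omega>"
    and f: "f \<in> L_inf \<Omega> B p" and "r \<in> \<Omega>" "f r = r"
  shows "f = id"
proof -
  define y where "y = f p"
  have y: "y \<in> \<Omega>"
    using L_inf_closed[OF f p p] by (simp add: y_def)
  have "move p y \<circ> f \<in> L_inf \<Omega> B p"
    using G f move_in_L_inf[OF y] unfolding elem_abelian_2group_def by blast
  moreover have "(move p y \<circ> f) p = p"
    by (simp add: y_def)
  ultimately have "move p y \<circ> f = id"
    by (rule L_inf_fixing_base_point[OF pi p])
  then have "move p y \<circ> (move p y \<circ> f) = move p y"
    by simp
  then have "f = move p y"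
    using move_involution[OF p y] by (simp add: comp_assoc[symmetric])
  then have "p = y"
    using move_no_fixpoint[OF p y \<open>r \<in> \<Omega>\<close>] \<open>f r = r\<close> by blast
  with \<open>f = move p y\<close> show ?thesis
    by simp
qed

lemma moves_agree_if_L_inf_group:
  assumes pi: "pi_inf \<Omega> B p = {id}" and G: "elem_abelian_2group (L_inf \<Omega> B p)" and p: "p \<in> \<Omega>"
  shows moves_agree
  unfolding moves_agree_def
proof (intro ballI)
  fix a b c assume points: "a \<in> \<Omega>" "b \<in> \<Omega>" "c \<in> \<Omega>"
  define d where "d = move a b c"
  have d: "d \<in> \<Omega>"
    using move_closed points by (simp add: d_def)
  have "move a b \<circ> move c d \<in> L_inf \<Omega> B p"
    using G move_in_L_inf_group[OF G p] points d unfolding elem_abelian_2group_def by blast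
  moreover have "(move a b \<circ> move c d) c = c"
    using move_move points by (simp add: d_def)
  ultimately have "move a b \<circ> move c d = id"
    using L_inf_semiregular[OF pi G p _ points(3)] by blast
  then have "move a b \<circ> (move a b \<circ> move c d) = move a b"
    by simp
  then show "move c (move a b c) = move a b"
    using move_involution points by (simp add: d_def comp_assoc[symmetric])
qed

lemma move_base_sum:
  assumes moves_agree and points: "p \<in> \<Omega>" "a \<in> \<Omega>" "b \<in> \<Omega>"
  shows "move p (move p a b) = move a b"
proof -
  have "move a b p = move p a b"
    using move_swap[OF points(2,3,1)] by (simp add: move_commute)
  then show ?thesis
    using assms unfolding moves_agree_def by metis
qed

lemma boolean_group_moves:
  assumes moves_agree and p: "p \<in> \<Omega>"
  shows "boolean_group \<Omega> (move p) p"
proof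
  fix x y w assume points: "x \<in> \<Omega>" "y \<in> \<Omega>" "w \<in> \<Omega>"
  show "move p x y = move p y x"
    using move_swap[OF p points(1,2)] .
  have "move p (move p x y) w = move x y w"
    using move_base_sum[OF assms points(1,2)] by simp
  also have "\<dots> = move y x w"
    by (simp only: move_commute[of x y])
  also have "\<dots> = move y w x"
    using move_swap points by blast
  also have "\<dots> = move p (move p y w) x"
    using move_base_sum[OF assms points(2,3)] by simp
  also have "\<dots> = move p x (move p y w)"
    using move_swap move_closed p points by blast
  finally show "move p (move p x y) w = move p x (move p y w)" .
qed (use p move_closed in auto)

lemma is_BQS_if_moves_agree:
  assumes moves_agree and p: "p \<in> \<Omega>"
  obtains m where "is_BQS \<Omega> B m" "card \<Omega> = 2 ^ m"
proof -
  interpret boolean_group \<Omega> "move p" p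
    by (rule boolean_group_moves[OF assms])
  obtain m g where g: "\<And>i. i < m \<Longrightarrow> g i \<in> \<Omega>" and bij: "bij_betw (lincomb g m) (F2vec m) \<Omega>"
    using ex_bij_lincomb[OF finite_points] by blast
  define \<psi> where "\<psi> = lincomb g m"
  have inj: "inj_on \<psi> (F2vec m)" and onto: "\<psi> ` F2vec m = \<Omega>"
    using bij by (auto simp: \<psi>_def bij_betw_def)
  have sum3: "\<psi> (u + v + w) = move (\<psi> u) (\<psi> v) (\<psi> w)" if "u \<in> F2vec m" "v \<in> F2vec m" for u v w
  proof -
    have "\<psi> (u + v + w) = move p (move p (\<psi> u) (\<psi> v)) (\<psi> w)"
      by (simp add: \<psi>_def lincomb_add[OF g])
    also have "move p (move p (\<psi> u) (\<psi> v)) = move (\<psi> u) (\<psi> v)"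
      using move_base_sum[OF assms] onto that by blast
    finally show ?thesis .
  qed
  have "image \<psi> ` BQS_lines m = set_mset B"
  proof (intro equalityI subsetI)
    fix L assume "L \<in> image \<psi> ` BQS_lines m"
    then obtain X where X: "X \<in> BQS_lines m" "L = \<psi> ` X"
      by blast
    have "card X = 4"
      using X(1) by (simp add: mem_BQS_lines_iff)
    then obtain a b c d where abcd: "X = {a, b, c, d}" "distinct [a, b, c, d]"
      by (rule card_4_obtain)
    moreover have "{a, b, c, d} \<in> BQS_lines m"
      using X(1) abcd(1) by simp
    ultimately have vecs: "{a, b, c, d} \<subseteq> F2vec m" "d = a + b + c"
      using quadruple_in_BQS_lines_iff by blast+
    then have "distinct [\<psi> a, \<psi> b, \<psi> c]" "{\<psi> a, \<psi> b, \<psi> c} \<subseteq> \<Omega>"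
      using abcd(2) onto by (auto simp: inj_on_eq_iff[OF inj])
    then show "L \<in> set_mset B"
      using line_through_move(1)[of "\<psi> a" "\<psi> b" "\<psi> c"] X(2) abcd(1) vecs sum3 by simp
  next
    fix L assume "L \<in> set_mset B"
    then obtain a b c where abc: "a \<in> \<Omega>" "b \<in> \<Omega>" "c \<in> \<Omega>" "distinct [a, b, c]"
      and L: "L = {a, b, c, move a b c}"
      using line_obtain by blast
    obtain u v w where uvw: "u \<in> F2vec m" "v \<in> F2vec m" "w \<in> F2vec m" "a = \<psi> u" "b = \<psi> v" "c = \<psi> w"
      using abc(1-3) unfolding onto[symmetric] by (elim imageE) blast
    have images: "map \<psi> [u, v, w, u + v + w] = [a, b, c, move a b c]"
      using sum3 uvw by simp
    have "distinct [a, b, c, move a b c]"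
      using line_through_move(2)[OF abc] abc(4) by auto
    then have "distinct [u, v, w, u + v + w]"
      unfolding images[symmetric] distinct_map by blast
    moreover have "u + v + w \<in> F2vec m"
      using uvw by (simp add: F2vec_add)
    ultimately have "{u, v, w, u + v + w} \<in> BQS_lines m"
      using uvw by (simp add: quadruple_in_BQS_lines_iff)
    moreover have "L = \<psi> ` {u, v, w, u + v + w}"
      using L images by simp
    ultimately show "L \<in> image \<psi> ` BQS_lines m"
      by blast
  qed
  then have "is_BQS \<Omega> B m"
    using is_BQSI[OF bij] count_line by (simp add: \<psi>_def)
  moreover have "card \<Omega> = 2 ^ m"
    using bij_betw_same_card[OF bij] by (simp add: card_F2vec)
  ultimately show ?thesis
    using that by blast
qed

end

lemma two_le_exponent:
  assumes "(2 :: nat) ^ m = 2 * lam + 2" and "lam \<ge> 1"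
  shows "2 \<le> m"
proof (rule ccontr)
  assume "\<not> 2 \<le> m"
  then have "(2 :: nat) ^ m \<le> 2 ^ 1"
    by (intro power_increasing) simp_all
  with assms show False
    by simp
qed

theorem proposition5p3:
  fixes \<Omega> :: "'a set" and B :: "'a set multiset" and lam :: nat and pinf :: 'a
  assumes "design_2_4 \<Omega> B (2 * lam + 2) lam"
    and "lam \<ge> 1"
    and "supersimple B"
    and "pinf \<in> \<Omega>"
  shows "(prop_triangle B \<longleftrightarrow> (\<exists>m\<ge>2. is_BQS \<Omega> B m)) \<and>
         ((\<exists>m\<ge>2. is_BQS \<Omega> B m) \<longleftrightarrow>
            (pi_inf \<Omega> B pinf = {id} \<and>
             (\<exists>m\<ge>2. elem_abelian_2group (L_inf \<Omega> B pinf) \<and> card (L_inf \<Omega> B pinf) = 2 ^ m)))"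
proof -
  interpret sqs_design \<Omega> B lam
    using assms(1,3) by unfold_locales
  have triangle: "prop_triangle B \<longleftrightarrow> moves_agree"
    using moves_agree_if_triangle triangle_if_moves_agree by blast
  have BQS: "\<exists>m\<ge>2. is_BQS \<Omega> B m \<and> card \<Omega> = 2 ^ m" if agree: moves_agree
  proof -
    obtain m where "is_BQS \<Omega> B m" "card \<Omega> = 2 ^ m"
      by (rule is_BQS_if_moves_agree[OF agree assms(4)])
    then show ?thesis
      using two_le_exponent[OF _ assms(2)] card_points by auto
  qed
  have "(\<exists>m\<ge>2. is_BQS \<Omega> B m) \<longleftrightarrow> moves_agree"
    using BQS triangle prop_triangle_if_is_BQS line_subset by blast
  moreover have "(pi_inf \<Omega> B pinf = {id} \<and>
      (\<exists>m\<ge>2. elem_abelian_2group (L_inf \<Omega> B pinf) \<and> card (L_inf \<Omega> B pinf) = 2 ^ m)) \<longleftrightarrow> moves_agree"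
    using BQS moves_agree_if_L_inf_group pi_inf_eq elem_abelian_L_inf card_L_inf assms(4) by metis
  ultimately show ?thesis
    using triangle by blast
qed

end
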